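(* For every symmetric instance with $n$ actions and $k$ signals ($2\le k\le n$) there exist a slope $s\in[-\infty,0]$ and an optimal scheme with $k$ signals that is direct, persuasive, recommends only actions in $[k]$, and whose recommendation points form an $s$-Pareto point collection $\mathcal P$ satisfying $u_{\mathcal S}(\mathcal P)\ge u_{\mathcal S}(\mathcal P')$ for every $s'\in[-\infty,0]$ and every $s'$-Pareto point collection $\mathcal P'$.
   Context: Model: a receiver chooses one of the actions $[n]$; each action $i$ has a type $\theta_i$; the state $\boldsymbol\theta=(\theta_1,\dots,\theta_n)$ is drawn from a commonly known distribution $q$ over a finite set of type vectors. Each type $t$ has receiver value $\rho(t)$ and sender value $\xi(t)$, received if the receiver takes an action of that type. A signaling scheme with $k$ signals maps each state to a distribution over $k$ signals; the sender commits to it, observes the state and sends a signal; the receiver picks an action maximizing her conditional expected utility given the signal, breaking ties in favor of the sender. $u_{\mathcal S},u_{\mathcal R}$ denote expected utilities; optimal means maximizing $u_{\mathcal S}$ among schemes with $k$ signals. Direct: each signal recommends an action; persuasive: for each signal sent with positive probability recommending $i$, $\mathbb E[\rho(\theta_i)\mid\sigma]\ge\mathbb E[\rho(\theta_j)\mid\sigma]$ for all $j$. $\rho_E=\max_{i\in[n]}\sum_{\boldsymbol\theta}q_{\boldsymbol\theta}\rho(\theta_i)$. Symmetric instance: $q_{\boldsymbol\theta}=q_{\boldsymbol\theta'}$ whenever $\boldsymbol\theta'$ is a permutation of $\boldsymbol\theta$; all actions share the type set $\Theta$, and (w.l.o.g.) the types in any state are pairwise distinct. Identify each type $c$ with the point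 $(\rho(c),\xi(c))\in\mathbb R^2$. For a $k$-element set $C$ of types let $q_C=\Pr[\{\theta_1,\dots,\theta_k\}=C]$. For $s\in(-\infty,0]$, a point $p$ of the convex hull $\mathrm{conv}(C)$ corresponds to slope $s$ if it maximizes $y-sx$ over $(x,y)\in\mathrm{conv}(C)$; it corresponds to slope $-\infty$ if it maximizes $x$ (first coordinate) over $\mathrm{conv}(C)$. The Pareto frontier of $C$ is the set of points of $\mathrm{conv}(C)$ corresponding to some slope in $[-\infty,0]$. A point collection $\mathcal P$ assigns to each $C$ with $q_C>0$ a point $p(C)=(p_{\mathcal R}(C),p_{\mathcal S}(C))\in\mathrm{conv}(C)$; $u_{\mathcal S}(\mathcal P)=\sum_C q_Cp_{\mathcal S}(C)$ and $u_{\mathcal R}(\mathcal P)=\sum_Cq_Cp_{\mathcal R}(C)$. For $s\in[-\infty,0]$, $\mathcal P$ is $s$-Pareto if (1) for every $C$, $p(C)$ corresponds to slope $s$ (in particular lies on the Pareto frontier of $C$), and (2) $u_{\mathcal R}(\mathcal P)\ge\rho_E$. For a direct scheme recommending only actions in $[k]$, its recommendation point for $C$ is $(\mathbb E[\rho(\theta_\sigma)\mid \{\theta_1,\dots,\theta_k\}=C],\ \mathbb E[\xi(\theta_\sigma)\mid\{\theta_1,\dots,\theta_k\}=C])$, where $\sigma$ is the recommended action; these points form a point collection. *)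

theory Defs
  imports "HOL-Analysis.Analysis" "HOL-Probability.Probability_Mass_Function"
begin

text \<open>Actions are 0,...,n-1 (so [k] = {0..<k}); a state is a list of n types
(type variable 'c); the prior q is a pmf on states. Signals are 0,...,k-1.
A scheme is phi :: 'c list => nat => real, phi theta sigma = probability of signal sigma
in state theta. Types are identified with points (rho c, xi c) in R^2.\<close>

definition symmetric_instance :: "'c list pmf \<Rightarrow> nat \<Rightarrow> bool" where
  "symmetric_instance q n \<longleftrightarrow>
     finite (set_pmf q) \<and>
     (\<forall>th\<in>set_pmf q. length th = n \<and> distinct th) \<and>
     (\<forall>th th'. mset th = mset th' \<longrightarrow> pmf q th = pmf q th')"

definition valid_scheme :: "'c list pmf \<Rightarrow> nat \<Rightarrow> ('c list \<Rightarrow> nat \<Rightarrow> real) \<Rightarrow> bool" where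
  "valid_scheme q k phi \<longleftrightarrow>
     (\<forall>th\<in>set_pmf q. (\<forall>sg<k. 0 \<le> phi th sg) \<and> (\<Sum>sg<k. phi th sg) = 1)"

definition sig_prob :: "'c list pmf \<Rightarrow> ('c list \<Rightarrow> nat \<Rightarrow> real) \<Rightarrow> nat \<Rightarrow> real" where
  "sig_prob q phi sg = (\<Sum>th\<in>set_pmf q. pmf q th * phi th sg)"

definition joint_val :: "'c list pmf \<Rightarrow> ('c \<Rightarrow> real) \<Rightarrow> ('c list \<Rightarrow> nat \<Rightarrow> real) \<Rightarrow> nat \<Rightarrow> nat \<Rightarrow> real" where
  "joint_val q f phi sg i = (\<Sum>th\<in>set_pmf q. pmf q th * phi th sg * f (th ! i))"

text \<open>Receiver best responses to signal sg (actions maximising conditional expected utility;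
for a zero-probability signal every action is a best response, which is irrelevant).\<close>
definition best_resp :: "'c list pmf \<Rightarrow> nat \<Rightarrow> ('c \<Rightarrow> real) \<Rightarrow> ('c list \<Rightarrow> nat \<Rightarrow> real) \<Rightarrow> nat \<Rightarrow> nat set" where
  "best_resp q n rho phi sg = {i. i < n \<and> (\<forall>j<n. joint_val q rho phi sg j \<le> joint_val q rho phi sg i)}"

text \<open>Sender utility, ties broken in favour of the sender.\<close>
definition sender_util :: "'c list pmf \<Rightarrow> nat \<Rightarrow> nat \<Rightarrow> ('c \<Rightarrow> real) \<Rightarrow> ('c \<Rightarrow> real) \<Rightarrow> ('c list \<Rightarrow> nat \<Rightarrow> real) \<Rightarrow> real" where
  "sender_util q n k rho xi phi =
     (\<Sum>sg<k. Max ((\<lambda>i. joint_val q xi phi sg i) ` best_resp q n rho phi sg))"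

definition optimal_scheme :: "'c list pmf \<Rightarrow> nat \<Rightarrow> nat \<Rightarrow> ('c \<Rightarrow> real) \<Rightarrow> ('c \<Rightarrow> real) \<Rightarrow> ('c list \<Rightarrow> nat \<Rightarrow> real) \<Rightarrow> bool" where
  "optimal_scheme q n k rho xi phi \<longleftrightarrow> valid_scheme q k phi \<and>
     (\<forall>psi. valid_scheme q k psi \<longrightarrow> sender_util q n k rho xi psi \<le> sender_util q n k rho xi phi)"

definition persuasive :: "'c list pmf \<Rightarrow> nat \<Rightarrow> nat \<Rightarrow> ('c \<Rightarrow> real) \<Rightarrow> ('c list \<Rightarrow> nat \<Rightarrow> real) \<Rightarrow> (nat \<Rightarrow> nat) \<Rightarrow> bool" where
  "persuasive q n k rho phi recm \<longleftrightarrow>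
     (\<forall>sg<k. recm sg < n \<and>
        (sig_prob q phi sg > 0 \<longrightarrow>
          (\<forall>j<n. joint_val q rho phi sg j / sig_prob q phi sg
                 \<le> joint_val q rho phi sg (recm sg) / sig_prob q phi sg)))"

definition rho_E :: "'c list pmf \<Rightarrow> nat \<Rightarrow> ('c \<Rightarrow> real) \<Rightarrow> real" where
  "rho_E q n rho = Max ((\<lambda>i. \<Sum>th\<in>set_pmf q. pmf q th * rho (th ! i)) ` {..<n})"

definition qC :: "'c list pmf \<Rightarrow> nat \<Rightarrow> 'c set \<Rightarrow> real" where
  "qC q k C = (\<Sum>th\<in>{th\<in>set_pmf q. set (take k th) = C}. pmf q th)"

definition pts :: "('c \<Rightarrow> real) \<Rightarrow> ('c \<Rightarrow> real) \<Rightarrow> 'c set \<Rightarrow> (real \<times> real) set" where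
  "pts rho xi C = (\<lambda>c. (rho c, xi c)) ` C"

text \<open>Slopes in [-infinity,0] are extended reals s <= 0.\<close>
definition corresponds_to_slope :: "ereal \<Rightarrow> (real \<times> real) set \<Rightarrow> real \<times> real \<Rightarrow> bool" where
  "corresponds_to_slope s A p \<longleftrightarrow> p \<in> convex hull A \<and>
     (if s = -\<infinity> then (\<forall>z\<in>convex hull A. fst z \<le> fst p)
      else (\<forall>z\<in>convex hull A. snd z - real_of_ereal s * fst z \<le> snd p - real_of_ereal s * fst p))"

text \<open>Point collections: functions P :: 'c set => real*real; only the values at sets C with
q_C > 0 matter.\<close>
definition uS_pc :: "'c list pmf \<Rightarrow> nat \<Rightarrow> ('c set \<Rightarrow> real \<times> real) \<Rightarrow> real" where
  "uS_pc q k P = (\<Sum>C\<in>{C. qC q k C > 0}. qC q k C * snd (P C))"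

definition uR_pc :: "'c list pmf \<Rightarrow> nat \<Rightarrow> ('c set \<Rightarrow> real \<times> real) \<Rightarrow> real" where
  "uR_pc q k P = (\<Sum>C\<in>{C. qC q k C > 0}. qC q k C * fst (P C))"

definition s_Pareto :: "'c list pmf \<Rightarrow> nat \<Rightarrow> nat \<Rightarrow> ('c \<Rightarrow> real) \<Rightarrow> ('c \<Rightarrow> real) \<Rightarrow> ereal \<Rightarrow> ('c set \<Rightarrow> real \<times> real) \<Rightarrow> bool" where
  "s_Pareto q n k rho xi s P \<longleftrightarrow>
     (\<forall>C. qC q k C > 0 \<longrightarrow> corresponds_to_slope s (pts rho xi C) (P C)) \<and>
     uR_pc q k P \<ge> rho_E q n rho"

definition rec_points :: "'c list pmf \<Rightarrow> nat \<Rightarrow> ('c \<Rightarrow> real) \<Rightarrow> ('c \<Rightarrow> real) \<Rightarrow> ('c list \<Rightarrow> nat \<Rightarrow> real) \<Rightarrow> (nat \<Rightarrow> nat) \<Rightarrow> 'c set \<Rightarrow> real \<times> real" where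
  "rec_points q k rho xi phi recm C =
     ((\<Sum>th\<in>{th\<in>set_pmf q. set (take k th) = C}. \<Sum>sg<k. pmf q th * phi th sg * rho (th ! recm sg)) / qC q k C,
      (\<Sum>th\<in>{th\<in>set_pmf q. set (take k th) = C}. \<Sum>sg<k. pmf q th * phi th sg * xi (th ! recm sg)) / qC q k C)"

end

theory Submission
  imports Defs "HOL-Combinatorics.Permutations"
begin

text \<open>Relabelling actions by a permutation that moves the sender-preferred best responses into $[k]$
  turns any scheme into one whose recommendation points form a point collection in the hulls
  $\mathrm{conv}(C)$ with receiver utility at least $\rho_E$ and sender utility at least that of the
  scheme. Conversely, every such collection is realised by the direct scheme that sends signal $i$
  with weight $\lambda_C(\theta_i)$ and recommends action $i$; invariance of the joint values under
  transpositions of $[k]$, together with $u_{\mathcal R} \ge \rho_E$, makes it persuasive. Optimal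
  schemes are therefore the optima of the linear program "maximise $u_{\mathcal S}$ subject to
  $u_{\mathcal R} \ge \rho_E$" over the compact convex set of point collections. A separating
  hyperplane supplies a multiplier $(a, b) \ge 0$ for which the optimum maximises $a x + b y$ in
  each hull separately, i.e.\ every point corresponds to the common slope $-a/b$ (or $-\infty$).\<close>

lemma convex_hull_image_weights:
  fixes f :: "'c \<Rightarrow> 'a::real_vector"
  assumes "finite C" "z \<in> convex hull (f ` C)"
  shows "\<exists>u. (\<forall>c\<in>C. 0 \<le> u c) \<and> sum u C = 1 \<and> (\<Sum>c\<in>C. u c *\<^sub>R f c) = z"
proof -
  let ?R = "{y. \<exists>u. (\<forall>c\<in>C. 0 \<le> u c) \<and> sum u C = 1 \<and> (\<Sum>c\<in>C. u c *\<^sub>R f c) = y}"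
  have "f ` C \<subseteq> ?R"
  proof
    fix y assume "y \<in> f ` C"
    then obtain c where c: "c \<in> C" "y = f c" by auto
    let ?u = "\<lambda>x. if x = c then 1 else (0::real)"
    have "(\<Sum>x\<in>C. ?u x *\<^sub>R f x) = (\<Sum>x\<in>C. if x = c then f x else 0)"
      by (rule sum.cong) auto
    then have "sum ?u C = 1" "(\<Sum>x\<in>C. ?u x *\<^sub>R f x) = f c"
      using c assms(1) by (simp_all add: sum.delta)
    then show "y \<in> ?R" using c by (intro CollectI exI[of _ ?u]) auto
  qed
  moreover have "convex ?R"
    unfolding convex_def
  proof safe
    fix u1 u2 :: "'c \<Rightarrow> real" and a b :: real
    assume h: "\<forall>c\<in>C. 0 \<le> u1 c" "sum u1 C = 1" "\<forall>c\<in>C. 0 \<le> u2 c" "sum u2 C = 1"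
      "0 \<le> a" "0 \<le> b" "a + b = 1"
    let ?u = "\<lambda>c. a * u1 c + b * u2 c"
    have "sum ?u C = 1" using h by (simp add: sum.distrib sum_distrib_left[symmetric])
    moreover have "(\<Sum>c\<in>C. ?u c *\<^sub>R f c)
        = a *\<^sub>R (\<Sum>c\<in>C. u1 c *\<^sub>R f c) + b *\<^sub>R (\<Sum>c\<in>C. u2 c *\<^sub>R f c)"
      by (simp add: scaleR_sum_right sum.distrib scaleR_add_left)
    moreover have "\<forall>c\<in>C. 0 \<le> ?u c" using h by auto
    ultimately show "\<exists>u. (\<forall>c\<in>C. 0 \<le> u c) \<and> sum u C = 1 \<and>
        (\<Sum>c\<in>C. u c *\<^sub>R f c) = a *\<^sub>R (\<Sum>c\<in>C. u1 c *\<^sub>R f c) + b *\<^sub>R (\<Sum>c\<in>C. u2 c *\<^sub>R f c)"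
      by metis
  qed
  ultimately have "convex hull (f ` C) \<subseteq> ?R" by (rule hull_minimal)
  then show ?thesis using assms(2) by blast
qed

lemma mem_weighted_set_sum:
  fixes H :: "'i \<Rightarrow> 'a::real_vector set"
  assumes "finite I"
  shows "z \<in> (\<Sum>i\<in>I. (\<lambda>x. w i *\<^sub>R x) ` H i) \<longleftrightarrow>
         (\<exists>p. (\<forall>i\<in>I. p i \<in> H i) \<and> z = (\<Sum>i\<in>I. w i *\<^sub>R p i))"
proof
  assume "z \<in> (\<Sum>i\<in>I. (\<lambda>x. w i *\<^sub>R x) ` H i)"
  then obtain s where s: "z = sum s I" "\<forall>i\<in>I. \<exists>x\<in>H i. s i = w i *\<^sub>R x"
    unfolding set_sum_alt[OF assms] by blast
  then obtain p where "\<forall>i\<in>I. p i \<in> H i \<and> s i = w i *\<^sub>R p i" by metis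
  with s(1) show "\<exists>p. (\<forall>i\<in>I. p i \<in> H i) \<and> z = (\<Sum>i\<in>I. w i *\<^sub>R p i)"
    by (metis (mono_tags, lifting) sum.cong)
qed (auto simp: set_sum_alt[OF assms])

lemma ray_bounded_below:
  fixes \<beta> c m :: real
  assumes ray: "\<And>t. 0 < t \<Longrightarrow> \<beta> \<le> c + t * m"
  shows "0 \<le> m" and "\<beta> \<le> c"
proof -
  show m: "0 \<le> m"
  proof (rule ccontr)
    assume "\<not> 0 \<le> m"
    then have "\<beta> \<le> c + ((\<bar>c - \<beta>\<bar> + 1) / - m) * m" by (intro ray divide_pos_pos) auto
    also have "\<dots> = c - (\<bar>c - \<beta>\<bar> + 1)" using \<open>\<not> 0 \<le> m\<close> by simp
    finally show False by linarith
  qed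
  show "\<beta> \<le> c"
  proof (rule field_le_epsilon)
    fix e :: real assume "0 < e"
    then have "\<beta> \<le> c + (e / (m + 1)) * m" using m by (intro ray) auto
    also have "(e / (m + 1)) * m \<le> e" using m \<open>0 < e\<close> by (simp add: field_simps)
    finally show "\<beta> \<le> c + e" by simp
  qed
qed

text \<open>A Lagrange multiplier in the plane: separate \<open>K\<close> from the region
  \<open>{z. r \<le> fst z \<and> snd z0 < snd z}\<close>.\<close>
lemma supporting_functional_of_constrained_max:
  fixes K :: "(real \<times> real) set" and r :: real
  assumes "convex K" "z0 \<in> K" "r \<le> fst z0"
    and max: "\<And>z. z \<in> K \<Longrightarrow> r \<le> fst z \<Longrightarrow> snd z \<le> snd z0"
  shows "\<exists>a b. 0 \<le> a \<and> 0 \<le> b \<and> (a, b) \<noteq> (0, 0) \<and>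
           (\<forall>z\<in>K. a * fst z + b * snd z \<le> a * fst z0 + b * snd z0)"
proof -
  define U :: "(real \<times> real) set" where "U = {z. r \<le> inner (1, 0) z} \<inter> {z. snd z0 < inner (0, 1) z}"
  have "convex U" unfolding U_def by (intro convex_Int convex_halfspace_ge convex_halfspace_gt)
  moreover have "(r, snd z0 + 1) \<in> U" by (simp add: U_def)
  moreover have "K \<inter> U = {}" using max by (fastforce simp: U_def)
  ultimately obtain v \<beta> where v: "v \<noteq> 0" "\<forall>z\<in>K. inner v z \<le> \<beta>" "\<forall>z\<in>U. \<beta> \<le> inner v z"
    using separating_hyperplane_sets[OF \<open>convex K\<close>] \<open>z0 \<in> K\<close> by blast
  obtain a b where ab: "v = (a, b)" by fastforce
  have U_bound: "\<beta> \<le> a * (r + s) + b * (snd z0 + t)" if "0 \<le> s" "0 < t" for s t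
  proof -
    have "(r + s, snd z0 + t) \<in> U" using that by (simp add: U_def)
    with v(3) ab show ?thesis by auto
  qed
  have "0 \<le> b" "\<beta> \<le> a * r + b * snd z0"
    using ray_bounded_below[of \<beta> "a * r + b * snd z0" b] U_bound[of 0] by (auto simp: algebra_simps)
  moreover have "0 \<le> a"
    using ray_bounded_below(1)[of \<beta> "a * r + b * (snd z0 + 1)" a] U_bound[of _ 1]
    by (auto simp: algebra_simps)
  moreover have "a * fst z + b * snd z \<le> a * fst z0 + b * snd z0" if "z \<in> K" for z
  proof -
    have "a * fst z + b * snd z \<le> \<beta>" using v(2) that ab by (cases z) auto
    also have "\<beta> \<le> a * r + b * snd z0" by fact
    also have "\<dots> \<le> a * fst z0 + b * snd z0" using \<open>0 \<le> a\<close> \<open>r \<le> fst z0\<close> by (simp add: mult_left_mono)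
    finally show ?thesis .
  qed
  ultimately show ?thesis using v(1) ab by (intro exI[of _ a] exI[of _ b]) (auto simp: zero_prod_def)
qed

text \<open>Maximising $a x + b y$ is maximising $y - s x$ for $s = -a/b$, or maximising $x$ if $b = 0$.\<close>
definition normal_slope :: "real \<Rightarrow> real \<Rightarrow> ereal" where
  "normal_slope a b = (if b = 0 then -\<infinity> else ereal (- a / b))"

lemma normal_slope_nonpos: "0 \<le> a \<Longrightarrow> 0 \<le> b \<Longrightarrow> normal_slope a b \<le> 0"
  by (simp add: normal_slope_def)

lemma corresponds_to_slope_normal_slope:
  assumes "0 \<le> a" "0 \<le> b" "(a, b) \<noteq> (0, 0)" "p \<in> convex hull A"
    and max: "\<And>z. z \<in> convex hull A \<Longrightarrow> a * fst z + b * snd z \<le> a * fst p + b * snd p"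
  shows "corresponds_to_slope (normal_slope a b) A p"
proof (cases "b = 0")
  case True
  with assms(1,3) have "0 < a" by simp
  with max True show ?thesis
    using \<open>p \<in> convex hull A\<close> by (simp add: corresponds_to_slope_def normal_slope_def)
next
  case False
  with assms(2) have "0 < b" by simp
  have "snd z + a / b * fst z \<le> snd p + a / b * fst p" if "z \<in> convex hull A" for z
    using divide_right_mono[OF max[OF that], of b] \<open>0 < b\<close> by (simp add: add_divide_distrib)
  with False show ?thesis
    using \<open>p \<in> convex hull A\<close> by (simp add: corresponds_to_slope_def normal_slope_def)
qed

lemma maximizer_of_weighted_sum_maximizes_terms:
  fixes f :: "'a \<Rightarrow> real"
  assumes "finite I" "i \<in> I" "0 < w i" "\<forall>j\<in>I. P j \<in> H j" "z \<in> H i"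
    and max: "\<And>P'. \<forall>j\<in>I. P' j \<in> H j \<Longrightarrow> (\<Sum>j\<in>I. w j * f (P' j)) \<le> (\<Sum>j\<in>I. w j * f (P j))"
  shows "f z \<le> f (P i)"
proof -
  have "(\<Sum>j\<in>I. w j * f ((P(i := z)) j)) = (\<Sum>j\<in>I. w j * f (P j)) + w i * (f z - f (P i))"
    using assms(1,2) by (simp add: sum.remove algebra_simps)
  moreover have "(\<Sum>j\<in>I. w j * f ((P(i := z)) j)) \<le> (\<Sum>j\<in>I. w j * f (P j))"
    using assms(4,5) by (intro max) auto
  ultimately show ?thesis using \<open>0 < w i\<close> by (simp add: mult_le_0_iff)
qed

lemma constrained_optimum_common_slope:
  fixes V :: "'i \<Rightarrow> (real \<times> real) set" and w :: "'i \<Rightarrow> real"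
  assumes fin: "finite I" "\<And>i. i \<in> I \<Longrightarrow> finite (V i)" and pos: "\<And>i. i \<in> I \<Longrightarrow> 0 < w i"
    and feasible: "\<forall>i\<in>I. P0 i \<in> convex hull V i" "r \<le> (\<Sum>i\<in>I. w i * fst (P0 i))"
  obtains s P where "s \<le> 0" "\<forall>i\<in>I. corresponds_to_slope s (V i) (P i)"
    "r \<le> (\<Sum>i\<in>I. w i * fst (P i))"
    "\<And>P'. \<forall>i\<in>I. P' i \<in> convex hull V i \<Longrightarrow> r \<le> (\<Sum>i\<in>I. w i * fst (P' i)) \<Longrightarrow>
       (\<Sum>i\<in>I. w i * snd (P' i)) \<le> (\<Sum>i\<in>I. w i * snd (P i))"
proof -
  define K where "K = (\<Sum>i\<in>I. (\<lambda>x. w i *\<^sub>R x) ` (convex hull V i))"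
  have mem_K: "z \<in> K \<longleftrightarrow> (\<exists>P. (\<forall>i\<in>I. P i \<in> convex hull V i) \<and> z = (\<Sum>i\<in>I. w i *\<^sub>R P i))" for z
    unfolding K_def by (rule mem_weighted_set_sum[OF fin(1)])
  have "K = convex hull (\<Sum>i\<in>I. (\<lambda>x. w i *\<^sub>R x) ` V i)"
    by (simp add: K_def convex_hull_set_sum convex_hull_scaling)
  then have "compact K" "convex K"
    using fin by (simp_all add: finite_imp_compact_convex_hull finite_set_sum)
  define F where "F = K \<inter> {z. r \<le> fst z}"
  have "compact F" unfolding F_def
    by (intro compact_Int_closed \<open>compact K\<close> closed_Collect_le continuous_intros)
  moreover have "(\<Sum>i\<in>I. w i *\<^sub>R P0 i) \<in> K" unfolding mem_K using feasible(1) by blast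
  then have "(\<Sum>i\<in>I. w i *\<^sub>R P0 i) \<in> F" using feasible(2) by (simp add: F_def fst_sum)
  ultimately have "\<exists>z0\<in>F. \<forall>z\<in>F. snd z \<le> snd z0"
    by (intro continuous_attains_sup) (auto intro: continuous_intros)
  then obtain z0 where z0: "z0 \<in> F" "\<And>z. z \<in> F \<Longrightarrow> snd z \<le> snd z0" by blast
  have "z0 \<in> K" "r \<le> fst z0" using z0(1) by (auto simp: F_def)
  from \<open>z0 \<in> K\<close> obtain P where P: "\<forall>i\<in>I. P i \<in> convex hull V i" "z0 = (\<Sum>i\<in>I. w i *\<^sub>R P i)"
    unfolding mem_K by blast
  then obtain a b where ab: "0 \<le> a" "0 \<le> b" "(a, b) \<noteq> (0, 0)"
      "\<And>z. z \<in> K \<Longrightarrow> a * fst z + b * snd z \<le> a * fst z0 + b * snd z0"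
    using supporting_functional_of_constrained_max[OF \<open>convex K\<close> \<open>z0 \<in> K\<close> \<open>r \<le> fst z0\<close>] z0(2)
    unfolding F_def by blast
  define L where "L z = a * fst z + b * snd z" for z :: "real \<times> real"
  have L_sum: "L (\<Sum>i\<in>I. w i *\<^sub>R Q i) = (\<Sum>i\<in>I. w i * L (Q i))" for Q
    by (simp add: L_def fst_sum snd_sum sum_distrib_left sum.distrib algebra_simps)
  have "L z \<le> L (P i)" if "i \<in> I" "z \<in> convex hull V i" for i z
  proof (rule maximizer_of_weighted_sum_maximizes_terms[where H = "\<lambda>i. convex hull V i"])
    show "finite I" "i \<in> I" "0 < w i" "\<forall>j\<in>I. P j \<in> convex hull V j" "z \<in> convex hull V i"
      using fin(1) that pos P(1) by auto
  next
    fix P' assume "\<forall>j\<in>I. P' j \<in> convex hull V j"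
    then have "(\<Sum>j\<in>I. w j *\<^sub>R P' j) \<in> K" unfolding mem_K by blast
    then have "L (\<Sum>j\<in>I. w j *\<^sub>R P' j) \<le> L z0" using ab(4) by (simp add: L_def)
    then show "(\<Sum>j\<in>I. w j * L (P' j)) \<le> (\<Sum>j\<in>I. w j * L (P j))" by (simp add: L_sum P(2))
  qed
  then have "\<forall>i\<in>I. corresponds_to_slope (normal_slope a b) (V i) (P i)"
    using P(1) ab(1-3) by (auto simp: L_def intro!: corresponds_to_slope_normal_slope)
  moreover have "r \<le> (\<Sum>i\<in>I. w i * fst (P i))" using \<open>r \<le> fst z0\<close> by (simp add: P(2) fst_sum)
  moreover have "(\<Sum>i\<in>I. w i * snd (P' i)) \<le> (\<Sum>i\<in>I. w i * snd (P i))"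
    if "\<forall>i\<in>I. P' i \<in> convex hull V i" "r \<le> (\<Sum>i\<in>I. w i * fst (P' i))" for P'
  proof -
    have "(\<Sum>i\<in>I. w i *\<^sub>R P' i) \<in> K" unfolding mem_K using that(1) by blast
    then have "(\<Sum>i\<in>I. w i *\<^sub>R P' i) \<in> F" using that(2) by (simp add: F_def fst_sum)
    from z0(2)[OF this] show ?thesis by (simp add: P(2) snd_sum)
  qed
  ultimately show thesis using that normal_slope_nonpos[OF ab(1,2)] by blast
qed

lemma exists_permutes_image_subset:
  assumes "finite S" "A \<subseteq> S" "B \<subseteq> S" "card A \<le> card B"
  obtains \<sigma> where "\<sigma> permutes S" "\<sigma> ` A \<subseteq> B"
proof -
  have "finite A" "finite B" using assms finite_subset by blast+
  obtain B' where B': "B' \<subseteq> B" "card B' = card A"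
    using obtain_subset_with_card_n[OF assms(4)] by blast
  have "finite B'" using B'(1) \<open>finite B\<close> finite_subset by blast
  obtain f where f: "bij_betw f A B'"
    using finite_same_card_bij[OF \<open>finite A\<close> \<open>finite B'\<close>] B'(2) by auto
  have "card (S - A) = card (S - B')"
    using assms B' \<open>finite A\<close> \<open>finite B'\<close> by (simp add: card_Diff_subset)
  then obtain g where g: "bij_betw g (S - A) (S - B')"
    using finite_same_card_bij[of "S - A" "S - B'"] assms(1) by auto
  define \<sigma> where "\<sigma> x = (if x \<in> A then f x else if x \<in> S then g x else x)" for x
  have "bij_betw \<sigma> A B'" using f by (auto simp: \<sigma>_def bij_betw_def inj_on_def)
  moreover have "bij_betw \<sigma> (S - A) (S - B')" using g by (auto simp: \<sigma>_def bij_betw_def inj_on_def)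
  ultimately have "bij_betw \<sigma> (A \<union> (S - A)) (B' \<union> (S - B'))"
    by (rule bij_betw_combine) auto
  moreover have "A \<union> (S - A) = S" "B' \<union> (S - B') = S" using assms(2,3) B'(1) by auto
  ultimately have "\<sigma> permutes S" by (intro bij_imp_permutes) (auto simp: \<sigma>_def)
  moreover have "\<sigma> ` A \<subseteq> B" using f B'(1) by (auto simp: \<sigma>_def bij_betw_def)
  ultimately show thesis by (rule that)
qed

context
  fixes F :: "nat \<Rightarrow> nat \<Rightarrow> real" and k n :: nat
  assumes k_le_n: "k \<le> n"
    and invariant: "\<And>x y i j. x < k \<Longrightarrow> y < k \<Longrightarrow> i < k \<Longrightarrow> j < n \<Longrightarrow>
      F i j = F (Transposition.transpose x y i) (Transposition.transpose x y j)"
begin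

lemma invariant_diagonal: "i < k \<Longrightarrow> a < k \<Longrightarrow> F i i = F a a"
  using invariant[of i a i i] k_le_n by simp

lemma invariant_off_diagonal:
  assumes "i < k" "j < k" "i \<noteq> j" "a < k" "b < k" "a \<noteq> b"
  shows "F i j = F a b"
proof -
  define j' where "j' = Transposition.transpose i a j"
  have j': "j' < k" "j' \<noteq> a" using assms by (auto simp: j'_def Transposition.transpose_def)
  have "F i j = F a j'" using invariant[of i a i j] assms k_le_n by (simp add: j'_def)
  also have "\<dots> = F a b" using invariant[of j' b a j'] assms j' k_le_n by (simp add: Transposition.transpose_def)
  finally show ?thesis .
qed

lemma invariant_outside: "i < k \<Longrightarrow> a < k \<Longrightarrow> k \<le> j \<Longrightarrow> j < n \<Longrightarrow> F i j = F a j"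
  using invariant[of i a i j] by (simp add: Transposition.transpose_def)

lemma invariant_diagonal_dominant:
  assumes "2 \<le> k" "i < k" "j < n"
    and column: "\<And>j. j < n \<Longrightarrow> (\<Sum>a<k. F a j) \<le> R" and trace: "R \<le> (\<Sum>a<k. F a a)"
  shows "F i j \<le> F i i"
proof -
  have "(\<Sum>a<k. F a a) = (\<Sum>a<k. F i i)"
    using invariant_diagonal[OF \<open>i < k\<close>] by (intro sum.cong) auto
  then have trace_eq: "(\<Sum>a<k. F a a) = k * F i i" by simp
  consider "k \<le> j" | "j = i" | "j < k" "j \<noteq> i" by linarith
  then show ?thesis
  proof cases
    case 1
    have "(\<Sum>a<k. F a j) = (\<Sum>a<k. F i j)"
      using invariant_outside[OF \<open>i < k\<close> _ 1 \<open>j < n\<close>] by (intro sum.cong) auto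
    then have "k * F i j = (\<Sum>a<k. F a j)" by simp
    also have "\<dots> \<le> k * F i i" using column[OF \<open>j < n\<close>] trace trace_eq by simp
    finally show ?thesis using \<open>2 \<le> k\<close> by simp
  next
    case 2
    then show ?thesis by simp
  next
    case 3
    have off: "F a b = F i j" if "a < k" "b < k" "a \<noteq> b" for a b
      using invariant_off_diagonal[of a b i j] that 3 \<open>i < k\<close> by simp
    have "(\<Sum>a<k. \<Sum>b<k. F a b) = (\<Sum>a<k. F a a + (\<Sum>b\<in>{..<k} - {a}. F a b))"
      by (simp add: sum.remove)
    also have "\<dots> = k * F i i + k * (k - 1) * F i j"
      using off trace_eq \<open>2 \<le> k\<close> by (simp add: sum.distrib of_nat_diff)
    finally have total: "(\<Sum>a<k. \<Sum>b<k. F a b) = k * F i i + k * (k - 1) * F i j" .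
    have "(\<Sum>a<k. \<Sum>b<k. F a b) = (\<Sum>b<k. \<Sum>a<k. F a b)" by (rule sum.swap)
    also have "\<dots> \<le> (\<Sum>b<k. R)" using column k_le_n by (intro sum_mono) auto
    finally have "k * (k - 1) * F i j \<le> k * R - k * F i i" using total by simp
    also have "\<dots> \<le> k * (k - 1) * F i i"
      using mult_left_mono[of R "k * F i i" k] trace trace_eq by (simp add: algebra_simps)
    finally show ?thesis using \<open>2 \<le> k\<close> by simp
  qed
qed

end

lemma sum_joint_val_signals:
  assumes "valid_scheme q k psi"
  shows "(\<Sum>sg<k. joint_val q f psi sg j) = (\<Sum>th\<in>set_pmf q. pmf q th * f (th ! j))"
proof -
  have "(\<Sum>sg<k. joint_val q f psi sg j) = (\<Sum>th\<in>set_pmf q. pmf q th * f (th ! j) * (\<Sum>sg<k. psi th sg))"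
    unfolding joint_val_def by (subst sum.swap) (simp add: sum_distrib_left algebra_simps)
  also have "\<dots> = (\<Sum>th\<in>set_pmf q. pmf q th * f (th ! j))"
    using assms unfolding valid_scheme_def by (intro sum.cong) auto
  finally show ?thesis .
qed

lemma finite_best_resp: "finite (best_resp q n rho psi sg)"
  by (rule finite_subset[of _ "{..<n}"]) (auto simp: best_resp_def)

lemma best_resp_nonempty:
  assumes "0 < n"
  shows "best_resp q n rho psi sg \<noteq> {}"
proof -
  let ?f = "\<lambda>i. joint_val q rho psi sg i"
  have "Max (?f ` {..<n}) \<in> ?f ` {..<n}" using assms by (intro Max_in) auto
  then obtain i where "i < n" "?f i = Max (?f ` {..<n})" by auto
  then have "i \<in> best_resp q n rho psi sg" by (auto simp: best_resp_def)
  then show ?thesis by blast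
qed

lemma sender_util_attained:
  assumes "0 < n"
  obtains a where "\<And>sg. a sg \<in> best_resp q n rho psi sg"
    "sender_util q n k rho xi psi = (\<Sum>sg<k. joint_val q xi psi sg (a sg))"
proof -
  have "\<exists>i \<in> best_resp q n rho psi sg.
      joint_val q xi psi sg i = Max ((\<lambda>i. joint_val q xi psi sg i) ` best_resp q n rho psi sg)" for sg
  proof -
    have "Max ((\<lambda>i. joint_val q xi psi sg i) ` best_resp q n rho psi sg)
        \<in> (\<lambda>i. joint_val q xi psi sg i) ` best_resp q n rho psi sg"
      using best_resp_nonempty[OF assms] by (intro Max_in finite_imageI finite_best_resp) simp
    then show ?thesis by (metis (no_types, lifting) imageE)
  qed
  then obtain a where a: "\<And>sg. a sg \<in> best_resp q n rho psi sg"
    "\<And>sg. joint_val q xi psi sg (a sg) = Max ((\<lambda>i. joint_val q xi psi sg i) ` best_resp q n rho psi sg)"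
    by metis
  show thesis
  proof (rule that)
    show "sender_util q n k rho xi psi = (\<Sum>sg<k. joint_val q xi psi sg (a sg))"
      unfolding sender_util_def by (rule sum.cong) (simp_all only: a(2))
  qed (fact a(1))
qed

lemma sender_util_ge:
  assumes "\<And>sg. sg < k \<Longrightarrow> a sg \<in> best_resp q n rho psi sg"
  shows "(\<Sum>sg<k. joint_val q xi psi sg (a sg)) \<le> sender_util q n k rho xi psi"
  unfolding sender_util_def using assms by (intro sum_mono Max_ge finite_imageI finite_best_resp imageI) auto

lemma rho_E_le_best_responses:
  assumes "0 < n" "valid_scheme q k psi" "\<And>sg. sg < k \<Longrightarrow> a sg \<in> best_resp q n rho psi sg"
  shows "rho_E q n rho \<le> (\<Sum>sg<k. joint_val q rho psi sg (a sg))"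
proof -
  let ?f = "\<lambda>i. \<Sum>th\<in>set_pmf q. pmf q th * rho (th ! i)"
  have "Max (?f ` {..<n}) \<in> ?f ` {..<n}" using \<open>0 < n\<close> by (intro Max_in) auto
  then obtain j where "j < n" "rho_E q n rho = ?f j" unfolding rho_E_def by auto
  then have "rho_E q n rho = (\<Sum>sg<k. joint_val q rho psi sg j)"
    using sum_joint_val_signals[OF assms(2)] by simp
  also have "\<dots> \<le> (\<Sum>sg<k. joint_val q rho psi sg (a sg))"
    using assms(3) \<open>j < n\<close> unfolding best_resp_def by (intro sum_mono) auto
  finally show ?thesis .
qed

lemma rho_E_ge: "j < n \<Longrightarrow> (\<Sum>th\<in>set_pmf q. pmf q th * rho (th ! j)) \<le> rho_E q n rho"
  unfolding rho_E_def by (rule Max_ge) auto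

lemma persuasive_of_obedient:
  assumes "k \<le> n" "\<And>i j. i < k \<Longrightarrow> j < n \<Longrightarrow> joint_val q rho phi i j \<le> joint_val q rho phi i i"
  shows "persuasive q n k rho phi id"
  using assms by (auto simp: persuasive_def intro: divide_right_mono)

lemma permute_list_inv_cancel:
  assumes "\<sigma> permutes {..<length xs}"
  shows "permute_list (inv \<sigma>) (permute_list \<sigma> xs) = xs"
    and "permute_list \<sigma> (permute_list (inv \<sigma>) xs) = xs"
proof -
  have "inv \<sigma> permutes {..<length xs}" using assms by (rule permutes_inv)
  then show "permute_list (inv \<sigma>) (permute_list \<sigma> xs) = xs"
    "permute_list \<sigma> (permute_list (inv \<sigma>) xs) = xs"
    using assms by (simp_all flip: permute_list_compose add: permutes_inv_o)
qed

lemma set_take_permute_list: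
  assumes "\<sigma> permutes {..<k}" "k \<le> length xs"
  shows "set (take k (permute_list \<sigma> xs)) = set (take k xs)"
proof -
  have "\<sigma> permutes {..<length xs}" using assms by (auto intro: permutes_subset)
  then have "set (take k (permute_list \<sigma> xs)) = (\<lambda>i. xs ! \<sigma> i) ` {..<k}"
    using assms(2) nth_image[of k "permute_list \<sigma> xs"]
    by (auto simp: permute_list_nth lessThan_atLeast0 image_iff)
  also have "\<dots> = nth xs ` \<sigma> ` {..<k}" by (simp add: image_comp)
  also have "\<dots> = set (take k xs)"
    using assms nth_image[of k xs] by (simp add: permutes_image lessThan_atLeast0)
  finally show ?thesis .
qed

locale symmetric_persuasion =
  fixes q :: "'c list pmf" and n k :: nat and rho xi :: "'c \<Rightarrow> real"
  assumes symmetric: "symmetric_instance q n" and two_le_k: "2 \<le> k" and k_le_n: "k \<le> n"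
begin

lemma finite_states: "finite (set_pmf q)"
  and length_state: "th \<in> set_pmf q \<Longrightarrow> length th = n"
  and distinct_state: "th \<in> set_pmf q \<Longrightarrow> distinct th"
  and pmf_eq_if_mset_eq: "mset th = mset th' \<Longrightarrow> pmf q th = pmf q th'"
  using symmetric unfolding symmetric_instance_def by blast+

lemma permute_list_in_states:
  assumes "\<sigma> permutes {..<n}" "th \<in> set_pmf q"
  shows "permute_list \<sigma> th \<in> set_pmf q"
proof -
  have "mset (permute_list \<sigma> th) = mset th"
    using assms by (simp add: length_state)
  then show ?thesis using assms(2) pmf_eq_if_mset_eq by (metis set_pmf_iff)
qed

lemma sum_permute_states:
  assumes \<sigma>: "\<sigma> permutes {..<n}"
  shows "(\<Sum>th\<in>set_pmf q. pmf q th * g (permute_list \<sigma> th)) = (\<Sum>th\<in>set_pmf q. pmf q th * g th)"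
proof -
  have inv: "inv \<sigma> permutes {..<n}" using \<sigma> by (rule permutes_inv)
  have "bij_betw (permute_list \<sigma>) (set_pmf q) (set_pmf q)"
  proof (rule bij_betw_byWitness[where f' = "permute_list (inv \<sigma>)"])
    show "\<forall>th\<in>set_pmf q. permute_list (inv \<sigma>) (permute_list \<sigma> th) = th"
      "\<forall>th\<in>set_pmf q. permute_list \<sigma> (permute_list (inv \<sigma>) th) = th"
      using \<sigma> by (simp_all add: permute_list_inv_cancel length_state)
  qed (use permute_list_in_states[OF \<sigma>] permute_list_in_states[OF inv] in blast)+
  then have "(\<Sum>th\<in>set_pmf q. pmf q th * g th)
      = (\<Sum>th\<in>set_pmf q. pmf q (permute_list \<sigma> th) * g (permute_list \<sigma> th))"
    by (rule sum.reindex_bij_betw[symmetric])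
  also have "\<dots> = (\<Sum>th\<in>set_pmf q. pmf q th * g (permute_list \<sigma> th))"
    using \<sigma> pmf_eq_if_mset_eq[of "permute_list \<sigma> _" _] by (intro sum.cong refl) (simp add: length_state)
  finally show ?thesis by simp
qed

lemma valid_scheme_permuted:
  assumes "\<sigma> permutes {..<n}" "valid_scheme q k psi"
  shows "valid_scheme q k (\<lambda>th. psi (permute_list \<sigma> th))"
  using assms permute_list_in_states by (auto simp: valid_scheme_def)

lemma joint_val_permuted:
  assumes "\<sigma> permutes {..<n}" "i < n"
  shows "joint_val q f (\<lambda>th. psi (permute_list \<sigma> th)) sg (\<sigma> i) = joint_val q f psi sg i"
proof -
  have "joint_val q f psi sg i
      = (\<Sum>th\<in>set_pmf q. pmf q th * (psi (permute_list \<sigma> th) sg * f (permute_list \<sigma> th ! i)))"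
    unfolding joint_val_def
    using sum_permute_states[OF assms(1), of "\<lambda>th. psi th sg * f (th ! i)"] by (simp add: mult.assoc)
  also have "\<dots> = joint_val q f (\<lambda>th. psi (permute_list \<sigma> th)) sg (\<sigma> i)"
    unfolding joint_val_def using assms
    by (intro sum.cong refl) (simp add: permute_list_nth length_state mult.assoc)
  finally show ?thesis by simp
qed

definition prefix_class :: "'c set \<Rightarrow> 'c list set" where
  "prefix_class C = {th \<in> set_pmf q. set (take k th) = C}"

definition prefix_sets :: "'c set set" where
  "prefix_sets = {C. 0 < qC q k C}"

lemma qC_eq_sum: "qC q k C = sum (pmf q) (prefix_class C)"
  by (simp add: qC_def prefix_class_def)

lemma qC_pos: "C \<in> prefix_sets \<Longrightarrow> 0 < qC q k C"
  by (simp add: prefix_sets_def)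

lemma prefix_sets_eq: "prefix_sets = (\<lambda>th. set (take k th)) ` set_pmf q"
proof safe
  fix C assume "C \<in> prefix_sets"
  then have "prefix_class C \<noteq> {}" by (auto simp: prefix_sets_def qC_eq_sum)
  then show "C \<in> (\<lambda>th. set (take k th)) ` set_pmf q" by (auto simp: prefix_class_def)
next
  fix th assume th: "th \<in> set_pmf q"
  then have "pmf q th \<le> sum (pmf q) (prefix_class (set (take k th)))"
    using finite_states by (intro member_le_sum) (auto simp: prefix_class_def)
  then have "0 < sum (pmf q) (prefix_class (set (take k th)))"
    using pmf_positive[OF th] by linarith
  then show "set (take k th) \<in> prefix_sets" by (simp add: prefix_sets_def qC_eq_sum)
qed

lemma finite_prefix_sets: "finite prefix_sets"
  using finite_states by (simp add: prefix_sets_eq)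

lemma finite_prefix_set: "C \<in> prefix_sets \<Longrightarrow> finite C"
  by (auto simp: prefix_sets_eq)

lemma finite_pts: "C \<in> prefix_sets \<Longrightarrow> finite (pts rho xi C)"
  by (simp add: pts_def finite_prefix_set)

lemma sum_prefix_classes: "(\<Sum>C\<in>prefix_sets. \<Sum>th\<in>prefix_class C. g th) = (\<Sum>th\<in>set_pmf q. g th)"
  using sum.group[OF finite_states finite_prefix_sets, of "\<lambda>th. set (take k th)" g]
  by (simp add: prefix_sets_eq prefix_class_def)

lemma nth_in_prefix_set: "th \<in> set_pmf q \<Longrightarrow> i < k \<Longrightarrow> th ! i \<in> set (take k th)"
  using k_le_n by (simp add: length_state in_set_conv_nth exI[of _ i])

lemma sum_prefix_positions:
  assumes "th \<in> set_pmf q"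
  shows "(\<Sum>i<k. h (th ! i)) = (\<Sum>c\<in>set (take k th). h c)"
proof -
  have "k \<le> length th" using assms k_le_n by (simp add: length_state)
  moreover have "inj_on (nth th) {..<k}"
    using distinct_state[OF assms] \<open>k \<le> length th\<close> by (simp add: inj_on_def nth_eq_iff_index_eq)
  ultimately show ?thesis
    using sum.reindex[of "nth th" "{..<k}" h] nth_image[of k th] by (simp add: lessThan_atLeast0)
qed

lemma uS_pc_eq: "uS_pc q k P = (\<Sum>C\<in>prefix_sets. qC q k C * snd (P C))"
  and uR_pc_eq: "uR_pc q k P = (\<Sum>C\<in>prefix_sets. qC q k C * fst (P C))"
  by (simp_all add: uS_pc_def uR_pc_def prefix_sets_def)

lemma sum_rec_points:
  "(\<Sum>C\<in>prefix_sets. qC q k C * fst (rec_points q k rho xi phi recm C))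
     = (\<Sum>sg<k. joint_val q rho phi sg (recm sg))"
  "(\<Sum>C\<in>prefix_sets. qC q k C * snd (rec_points q k rho xi phi recm C))
     = (\<Sum>sg<k. joint_val q xi phi sg (recm sg))"
proof -
  have "(\<Sum>C\<in>prefix_sets. qC q k C *
        ((\<Sum>th\<in>prefix_class C. \<Sum>sg<k. pmf q th * phi th sg * f (th ! recm sg)) / qC q k C))
      = (\<Sum>sg<k. joint_val q f phi sg (recm sg))" for f
  proof -
    have "(\<Sum>C\<in>prefix_sets. qC q k C *
        ((\<Sum>th\<in>prefix_class C. \<Sum>sg<k. pmf q th * phi th sg * f (th ! recm sg)) / qC q k C))
      = (\<Sum>C\<in>prefix_sets. \<Sum>th\<in>prefix_class C. \<Sum>sg<k. pmf q th * phi th sg * f (th ! recm sg))"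
      by (intro sum.cong refl) (auto dest!: qC_pos)
    also have "\<dots> = (\<Sum>sg<k. joint_val q f phi sg (recm sg))"
      unfolding sum_prefix_classes joint_val_def by (rule sum.swap)
    finally show ?thesis .
  qed
  from this[of rho] this[of xi] show
    "(\<Sum>C\<in>prefix_sets. qC q k C * fst (rec_points q k rho xi phi recm C))
       = (\<Sum>sg<k. joint_val q rho phi sg (recm sg))"
    "(\<Sum>C\<in>prefix_sets. qC q k C * snd (rec_points q k rho xi phi recm C))
       = (\<Sum>sg<k. joint_val q xi phi sg (recm sg))"
    by (simp_all add: rec_points_def prefix_class_def)
qed

lemma rec_points_in_hull:
  assumes phi: "valid_scheme q k phi" and recm: "\<forall>sg<k. recm sg < k" and C: "C \<in> prefix_sets"
  shows "rec_points q k rho xi phi recm C \<in> convex hull pts rho xi C"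
proof -
  define w where "w = (\<lambda>(th, sg). pmf q th * phi th sg / qC q k C)"
  define y where "y = (\<lambda>(th, sg). (rho (th ! recm sg), xi (th ! recm sg)))"
  have "rec_points q k rho xi phi recm C = (\<Sum>th\<in>prefix_class C. \<Sum>sg<k. w (th, sg) *\<^sub>R y (th, sg))"
    by (simp add: rec_points_def w_def y_def prefix_class_def fst_sum snd_sum prod_eq_iff
        sum_divide_distrib)
  also have "\<dots> = (\<Sum>i\<in>prefix_class C \<times> {..<k}. w i *\<^sub>R y i)"
    by (simp add: sum.cartesian_product split_def)
  also have "\<dots> \<in> convex hull pts rho xi C"
  proof (rule convex_sum)
    have "(\<Sum>i\<in>prefix_class C \<times> {..<k}. w i) = (\<Sum>th\<in>prefix_class C. pmf q th * (\<Sum>sg<k. phi th sg) / qC q k C)"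
      by (simp add: sum.cartesian_product[symmetric] w_def sum_distrib_left sum_divide_distrib)
    also have "\<dots> = (\<Sum>th\<in>prefix_class C. pmf q th) / qC q k C"
      using phi by (simp add: valid_scheme_def prefix_class_def sum_divide_distrib)
    also have "\<dots> = 1" using qC_pos[OF C] by (simp add: qC_eq_sum)
    finally show "(\<Sum>i\<in>prefix_class C \<times> {..<k}. w i) = 1" .
    show "0 \<le> w i" if "i \<in> prefix_class C \<times> {..<k}" for i
      using that phi qC_pos[OF C] by (auto simp: w_def prefix_class_def valid_scheme_def)
    show "y i \<in> convex hull pts rho xi C" if "i \<in> prefix_class C \<times> {..<k}" for i
      using that recm nth_in_prefix_set
      by (intro hull_inc) (auto simp: y_def pts_def prefix_class_def)
  qed (simp_all add: finite_states prefix_class_def)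
  finally show ?thesis .
qed

lemma exists_dominating_point_collection:
  assumes psi: "valid_scheme q k psi"
  obtains P where "\<forall>C\<in>prefix_sets. P C \<in> convex hull pts rho xi C"
    "rho_E q n rho \<le> (\<Sum>C\<in>prefix_sets. qC q k C * fst (P C))"
    "sender_util q n k rho xi psi \<le> (\<Sum>C\<in>prefix_sets. qC q k C * snd (P C))"
proof -
  have "0 < n" using two_le_k k_le_n by simp
  obtain a where a: "\<And>sg. a sg \<in> best_resp q n rho psi sg"
    and util: "sender_util q n k rho xi psi = (\<Sum>sg<k. joint_val q xi psi sg (a sg))"
    using sender_util_attained[OF \<open>0 < n\<close>] by blast
  have a_lt: "a sg < n" for sg using a[of sg] by (simp add: best_resp_def)
  have "a ` {..<k} \<subseteq> {..<n}" "{..<k} \<subseteq> {..<n}" using a_lt k_le_n by auto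
  moreover have "card (a ` {..<k}) \<le> card {..<k}" by (rule card_image_le) simp
  ultimately obtain \<sigma> where \<sigma>: "\<sigma> permutes {..<n}" "\<sigma> ` a ` {..<k} \<subseteq> {..<k}"
    by (rule exists_permutes_image_subset[OF finite_lessThan])
  define psi' where "psi' = (\<lambda>th. psi (permute_list \<sigma> th))"
  define recm where "recm sg = \<sigma> (a sg)" for sg
  have recm_lt: "\<forall>sg<k. recm sg < k" using \<sigma>(2) by (auto simp: recm_def)
  have joint_val_eq: "joint_val q f psi' sg (recm sg) = joint_val q f psi sg (a sg)" for f sg
    unfolding psi'_def recm_def by (rule joint_val_permuted[OF \<sigma>(1) a_lt])
  show thesis
  proof (rule that[of "rec_points q k rho xi psi' recm"])
    show "\<forall>C\<in>prefix_sets. rec_points q k rho xi psi' recm C \<in> convex hull pts rho xi C"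
      using rec_points_in_hull[OF valid_scheme_permuted[OF \<sigma>(1) psi] recm_lt]
      by (simp add: psi'_def)
    show "rho_E q n rho \<le> (\<Sum>C\<in>prefix_sets. qC q k C * fst (rec_points q k rho xi psi' recm C))"
      using rho_E_le_best_responses[OF \<open>0 < n\<close> psi a] by (simp add: sum_rec_points joint_val_eq)
    show "sender_util q n k rho xi psi \<le> (\<Sum>C\<in>prefix_sets. qC q k C * snd (rec_points q k rho xi psi' recm C))"
      by (simp add: sum_rec_points joint_val_eq util)
  qed
qed

definition weight_scheme :: "('c set \<Rightarrow> 'c \<Rightarrow> real) \<Rightarrow> 'c list \<Rightarrow> nat \<Rightarrow> real" where
  "weight_scheme lam th sg = lam (set (take k th)) (th ! sg)"

lemma valid_weight_scheme:
  assumes "\<forall>C\<in>prefix_sets. (\<forall>c\<in>C. 0 \<le> lam C c) \<and> sum (lam C) C = 1"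
  shows "valid_scheme q k (weight_scheme lam)"
  unfolding valid_scheme_def weight_scheme_def
proof (intro ballI conjI allI impI)
  fix th assume th: "th \<in> set_pmf q"
  then have C: "set (take k th) \<in> prefix_sets" by (simp add: prefix_sets_eq)
  show "0 \<le> lam (set (take k th)) (th ! sg)" if "sg < k" for sg
    using assms C nth_in_prefix_set[OF th that] by blast
  show "(\<Sum>sg<k. lam (set (take k th)) (th ! sg)) = 1"
    using assms C by (simp add: sum_prefix_positions[OF th])
qed

lemma rec_points_weight_scheme:
  assumes C: "C \<in> prefix_sets"
  shows "rec_points q k rho xi (weight_scheme lam) id C = (\<Sum>c\<in>C. lam C c *\<^sub>R (rho c, xi c))"
proof -
  have "(\<Sum>th\<in>prefix_class C. \<Sum>sg<k. pmf q th * weight_scheme lam th sg * f (th ! sg)) / qC q k C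
      = (\<Sum>c\<in>C. lam C c * f c)" for f
  proof -
    have "(\<Sum>th\<in>prefix_class C. \<Sum>sg<k. pmf q th * weight_scheme lam th sg * f (th ! sg))
        = (\<Sum>th\<in>prefix_class C. pmf q th * (\<Sum>c\<in>C. lam C c * f c))"
    proof (rule sum.cong)
      fix th assume "th \<in> prefix_class C"
      then have th: "th \<in> set_pmf q" "set (take k th) = C" by (auto simp: prefix_class_def)
      have "(\<Sum>sg<k. pmf q th * weight_scheme lam th sg * f (th ! sg))
          = pmf q th * (\<Sum>sg<k. lam C (th ! sg) * f (th ! sg))"
        by (simp add: weight_scheme_def th(2) sum_distrib_left mult.assoc)
      also have "\<dots> = pmf q th * (\<Sum>c\<in>C. lam C c * f c)"
        using sum_prefix_positions[OF th(1), of "\<lambda>c. lam C c * f c"] th(2) by simp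
      finally show "(\<Sum>sg<k. pmf q th * weight_scheme lam th sg * f (th ! sg))
          = pmf q th * (\<Sum>c\<in>C. lam C c * f c)" .
    qed simp
    also have "\<dots> = qC q k C * (\<Sum>c\<in>C. lam C c * f c)" by (simp add: qC_eq_sum sum_distrib_right)
    finally show ?thesis using qC_pos[OF C] by simp
  qed
  from this[of rho] this[of xi] show ?thesis
    by (simp add: rec_points_def prefix_class_def[symmetric] prod_eq_iff fst_sum snd_sum)
qed

lemma weight_scheme_transposition_invariant:
  assumes "x < k" "y < k" "i < k" "j < n"
  shows "joint_val q rho (weight_scheme lam) i j
    = joint_val q rho (weight_scheme lam) (Transposition.transpose x y i) (Transposition.transpose x y j)"
    (is "_ = joint_val q rho _ (?\<tau> i) (?\<tau> j)")
proof -
  have \<tau>k: "?\<tau> permutes {..<k}" using assms by (intro permutes_swap_id) auto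
  then have \<tau>n: "?\<tau> permutes {..<n}" using k_le_n by (auto intro: permutes_subset)
  have "joint_val q rho (weight_scheme lam) i j = (\<Sum>th\<in>set_pmf q. pmf q th *
      (lam (set (take k (permute_list ?\<tau> th))) (permute_list ?\<tau> th ! i) * rho (permute_list ?\<tau> th ! j)))"
    unfolding joint_val_def weight_scheme_def
    using sum_permute_states[OF \<tau>n, of "\<lambda>th. lam (set (take k th)) (th ! i) * rho (th ! j)"]
    by (simp add: mult.assoc)
  also have "\<dots> = joint_val q rho (weight_scheme lam) (?\<tau> i) (?\<tau> j)"
    unfolding joint_val_def weight_scheme_def using assms k_le_n \<tau>k \<tau>n
    by (intro sum.cong refl) (simp add: set_take_permute_list permute_list_nth length_state mult.assoc)
  finally show ?thesis .
qed

lemma exists_obedient_realization: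
  assumes hull: "\<forall>C\<in>prefix_sets. P C \<in> convex hull pts rho xi C"
    and feasible: "rho_E q n rho \<le> (\<Sum>C\<in>prefix_sets. qC q k C * fst (P C))"
  obtains phi where "valid_scheme q k phi" "\<forall>C\<in>prefix_sets. rec_points q k rho xi phi id C = P C"
    "\<And>i j. i < k \<Longrightarrow> j < n \<Longrightarrow> joint_val q rho phi i j \<le> joint_val q rho phi i i"
proof -
  have "\<forall>C\<in>prefix_sets. \<exists>u. (\<forall>c\<in>C. 0 \<le> u c) \<and> sum u C = 1 \<and> (\<Sum>c\<in>C. u c *\<^sub>R (rho c, xi c)) = P C"
  proof
    fix C assume C: "C \<in> prefix_sets"
    show "\<exists>u. (\<forall>c\<in>C. 0 \<le> u c) \<and> sum u C = 1 \<and> (\<Sum>c\<in>C. u c *\<^sub>R (rho c, xi c)) = P C"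
      by (rule convex_hull_image_weights[OF finite_prefix_set[OF C]]) (use hull C in \<open>simp add: pts_def\<close>)
  qed
  from bchoice[OF this] obtain lam where lam: "\<forall>C\<in>prefix_sets. (\<forall>c\<in>C. 0 \<le> lam C c) \<and>
      sum (lam C) C = 1 \<and> (\<Sum>c\<in>C. lam C c *\<^sub>R (rho c, xi c)) = P C"
    by blast
  define phi where "phi = weight_scheme lam"
  have valid: "valid_scheme q k phi" using lam by (simp add: phi_def valid_weight_scheme)
  have rec: "\<forall>C\<in>prefix_sets. rec_points q k rho xi phi id C = P C"
    using lam by (simp add: phi_def rec_points_weight_scheme)
  have "joint_val q rho phi i j \<le> joint_val q rho phi i i" if "i < k" "j < n" for i j
  proof (rule invariant_diagonal_dominant[OF k_le_n _ two_le_k that])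
    show "joint_val q rho phi i j = joint_val q rho phi (Transposition.transpose x y i) (Transposition.transpose x y j)"
      if "x < k" "y < k" "i < k" "j < n" for x y i j
      unfolding phi_def by (rule weight_scheme_transposition_invariant[OF that])
    show "(\<Sum>a<k. joint_val q rho phi a j) \<le> rho_E q n rho" if "j < n" for j
      using that by (simp add: sum_joint_val_signals[OF valid] rho_E_ge)
    show "rho_E q n rho \<le> (\<Sum>a<k. joint_val q rho phi a a)"
      using feasible rec sum_rec_points(1)[of phi id] by simp
  qed
  with valid rec show thesis by (rule that)
qed

lemma s_Pareto_iff:
  "s_Pareto q n k rho xi s P \<longleftrightarrow>
     (\<forall>C\<in>prefix_sets. corresponds_to_slope s (pts rho xi C) (P C)) \<and>
     rho_E q n rho \<le> (\<Sum>C\<in>prefix_sets. qC q k C * fst (P C))"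
  by (simp add: s_Pareto_def uR_pc_eq prefix_sets_def)

lemma optimal_scheme_if_realizes_optimum:
  assumes optimum: "\<And>P'. \<forall>C\<in>prefix_sets. P' C \<in> convex hull pts rho xi C \<Longrightarrow>
      rho_E q n rho \<le> (\<Sum>C\<in>prefix_sets. qC q k C * fst (P' C)) \<Longrightarrow>
      (\<Sum>C\<in>prefix_sets. qC q k C * snd (P' C)) \<le> (\<Sum>C\<in>prefix_sets. qC q k C * snd (P C))"
    and phi: "valid_scheme q k phi" "\<forall>C\<in>prefix_sets. rec_points q k rho xi phi id C = P C"
    and obedient: "\<And>i j. i < k \<Longrightarrow> j < n \<Longrightarrow> joint_val q rho phi i j \<le> joint_val q rho phi i i"
  shows "optimal_scheme q n k rho xi phi"
  unfolding optimal_scheme_def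
proof (intro conjI allI impI)
  have "sg \<in> best_resp q n rho phi sg" if "sg < k" for sg
    using obedient that k_le_n by (simp add: best_resp_def)
  then have "(\<Sum>sg<k. joint_val q xi phi sg (id sg)) \<le> sender_util q n k rho xi phi"
    by (intro sender_util_ge) simp
  then have uS_le: "(\<Sum>C\<in>prefix_sets. qC q k C * snd (P C)) \<le> sender_util q n k rho xi phi"
    using phi(2) sum_rec_points(2)[of phi id] by simp
  fix psi assume "valid_scheme q k psi"
  then obtain P' where P': "\<forall>C\<in>prefix_sets. P' C \<in> convex hull pts rho xi C"
    "rho_E q n rho \<le> (\<Sum>C\<in>prefix_sets. qC q k C * fst (P' C))"
    "sender_util q n k rho xi psi \<le> (\<Sum>C\<in>prefix_sets. qC q k C * snd (P' C))"
    by (rule exists_dominating_point_collection)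
  with optimum[OF P'(1,2)] uS_le show "sender_util q n k rho xi psi \<le> sender_util q n k rho xi phi"
    by linarith
qed (fact phi(1))

lemma exists_optimal_Pareto_collection:
  obtains s P where "s \<le> 0" "\<forall>C\<in>prefix_sets. corresponds_to_slope s (pts rho xi C) (P C)"
    "rho_E q n rho \<le> (\<Sum>C\<in>prefix_sets. qC q k C * fst (P C))"
    "\<And>P'. \<forall>C\<in>prefix_sets. P' C \<in> convex hull pts rho xi C \<Longrightarrow>
       rho_E q n rho \<le> (\<Sum>C\<in>prefix_sets. qC q k C * fst (P' C)) \<Longrightarrow>
       (\<Sum>C\<in>prefix_sets. qC q k C * snd (P' C)) \<le> (\<Sum>C\<in>prefix_sets. qC q k C * snd (P C))"
proof -
  have "valid_scheme q k (\<lambda>_ sg. if sg = 0 then 1 else 0)"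
    using two_le_k by (simp add: valid_scheme_def)
  then obtain P0 where P0: "\<forall>C\<in>prefix_sets. P0 C \<in> convex hull pts rho xi C"
    "rho_E q n rho \<le> (\<Sum>C\<in>prefix_sets. qC q k C * fst (P0 C))"
    by (rule exists_dominating_point_collection)
  show thesis
  proof (rule constrained_optimum_common_slope[where V = "pts rho xi" and w = "qC q k"])
    show "finite prefix_sets" "\<And>C. C \<in> prefix_sets \<Longrightarrow> finite (pts rho xi C)"
      "\<And>C. C \<in> prefix_sets \<Longrightarrow> 0 < qC q k C"
      by (fact finite_prefix_sets finite_pts qC_pos)+
  qed (rule P0(1), rule P0(2), rule that)
qed

end

theorem theorem3p1:
  fixes q :: "'c list pmf" and n k :: nat and rho xi :: "'c \<Rightarrow> real"
  assumes "symmetric_instance q n" and "2 \<le> k" and "k \<le> n"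
  shows "\<exists>(s::ereal) phi recm. s \<le> 0 \<and>
           optimal_scheme q n k rho xi phi \<and>
           persuasive q n k rho phi recm \<and>
           (\<forall>sg<k. recm sg < k) \<and>
           s_Pareto q n k rho xi s (rec_points q k rho xi phi recm) \<and>
           (\<forall>(s'::ereal) P'. s' \<le> 0 \<longrightarrow> s_Pareto q n k rho xi s' P' \<longrightarrow>
              uS_pc q k P' \<le> uS_pc q k (rec_points q k rho xi phi recm))"
proof -
  interpret symmetric_persuasion q n k rho xi using assms by unfold_locales
  obtain s P where s: "s \<le> 0" "\<forall>C\<in>prefix_sets. corresponds_to_slope s (pts rho xi C) (P C)"
      "rho_E q n rho \<le> (\<Sum>C\<in>prefix_sets. qC q k C * fst (P C))"
      "\<And>P'. \<forall>C\<in>prefix_sets. P' C \<in> convex hull pts rho xi C \<Longrightarrow>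
         rho_E q n rho \<le> (\<Sum>C\<in>prefix_sets. qC q k C * fst (P' C)) \<Longrightarrow>
         (\<Sum>C\<in>prefix_sets. qC q k C * snd (P' C)) \<le> (\<Sum>C\<in>prefix_sets. qC q k C * snd (P C))"
    by (rule exists_optimal_Pareto_collection) (rule that)
  have "\<forall>C\<in>prefix_sets. P C \<in> convex hull pts rho xi C"
    using s(2) by (simp add: corresponds_to_slope_def)
  then obtain phi where phi: "valid_scheme q k phi" "\<forall>C\<in>prefix_sets. rec_points q k rho xi phi id C = P C"
      "\<And>i j. i < k \<Longrightarrow> j < n \<Longrightarrow> joint_val q rho phi i j \<le> joint_val q rho phi i i"
    by (rule exists_obedient_realization[OF _ s(3)]) (rule that)
  have "uS_pc q k P' \<le> uS_pc q k (rec_points q k rho xi phi id)"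
    if "s_Pareto q n k rho xi s' P'" for s' P'
    using that s(4) phi(2) by (auto simp: s_Pareto_iff uS_pc_eq corresponds_to_slope_def)
  moreover have "s_Pareto q n k rho xi s (rec_points q k rho xi phi id)"
    using s(2,3) phi(2) by (simp add: s_Pareto_iff)
  ultimately show ?thesis
    using s(1) optimal_scheme_if_realizes_optimum[OF s(4) phi] persuasive_of_obedient[OF \<open>k \<le> n\<close> phi(3)]
    by (intro exI[of _ s] exI[of _ phi] exI[of _ id]) simp
qed

end
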